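(* Let $n\ge 2$ be an integer and set, for real $r$ with $|r|>1$, $\rho(r)=r-\frac{|r|}{r}\sqrt{r^2-1}$. Then for every real $r$ with $|r|>1$, $$\int_{-1}^1 \frac{T_n(s)(1-s^2)^{\frac{3}{2}}}{(s-r)^3}\,ds = \frac{\pi}{4}\left\{\rho(r)^{n+1}\left[(n^2+2n+3)-3(n+1)\frac{|r|}{\sqrt{r^2-1}}\right]-\rho(r)^{n-1}\left[(n^2-2n+3)-3(n-1)\frac{|r|}{\sqrt{r^2-1}}\right]\right\}.$$
   Context: $T_k(s)=\cos(k\cos^{-1}s)$ is the Tchebyshev polynomial of the first kind. Since $|r|>1$, the integral is an ordinary (nonsingular) integral. *)

theory Defs
  imports "HOL-Analysis.Analysis"
begin

definition cheb_T :: "nat \<Rightarrow> real \<Rightarrow> real" where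
  "cheb_T k s = cos (real k * arccos s)"

definition rho :: "real \<Rightarrow> real" where
  "rho r = r - (\<bar>r\<bar> / r) * sqrt (r\<^sup>2 - 1)"

end

theory Submission
  imports Defs
begin

text \<open>Substituting s = cos t with t \<in> [-pi, 0] turns the integral into the integral of
  cos (n t) (sin t)^4 / (cos t - r)^3 over [-pi, 0]. Expanding (sin t)^4 = (1 - (cos t)^2)^2 in
  powers of cos t - r reduces it to the integrals \<open>cos_quot_integral r m k\<close> of
  cos (k t) / (cos t - r)^m over [-pi, 0] with k = n and m \<le> 3; the terms with m = 0 vanish
  because n \<ge> 2.
  Two recurrences determine these integrals: cos ((k + 2) t) + cos (k t) = 2 cos t cos ((k + 1) t)
  relates neighbouring k, and integrating the derivative of sin ((k + 1) t) / (cos t - r)^m raises m.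
  For m = 1 the first one is the recurrence satisfied by the powers of rho, the root of
  rho^2 - 2 r rho + 1 = 0 in (-1, 1), and an explicit antiderivative of 1 / (r - cos t) gives the
  initial value -pi / (r - rho).\<close>

lemma cos_ne_of_abs_gt_1:
  fixes r t :: real
  assumes "\<bar>r\<bar> > 1"
  shows "cos t \<noteq> r"
  by (metis abs_cos_le_one assms linorder_not_le)

lemma cos_add_cos_Suc_Suc:
  "cos (real (k + 2) * t) + cos (real k * t) = 2 * cos t * cos (real (Suc k) * t)"
proof -
  have "real (k + 2) * t = real (Suc k) * t + t" "real k * t = real (Suc k) * t - t"
    by (simp_all add: algebra_simps)
  then show ?thesis by (simp add: cos_add cos_diff)
qed

lemma sin_Suc_mult_sin:
  "sin (real (Suc k) * t) * sin t = (cos (real k * t) - cos (real (k + 2) * t)) / 2"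
proof -
  have "real (k + 2) * t = real (Suc k) * t + t" "real k * t = real (Suc k) * t - t"
    by (simp_all add: algebra_simps)
  then show ?thesis by (simp add: cos_add cos_diff)
qed

lemma sin_mult_minus_pi: "sin (real k * - pi) = 0"
  by (metis minus_mult_right sin_minus sin_npi neg_equal_0_iff_equal)

definition cos_quot_integral :: "real \<Rightarrow> nat \<Rightarrow> nat \<Rightarrow> real" where
  "cos_quot_integral r m k = integral {-pi..0} (\<lambda>t. cos (real k * t) / (cos t - r) ^ m)"

lemma has_integral_cos_quot_integral:
  assumes "\<bar>r\<bar> > 1"
  shows "((\<lambda>t. cos (real k * t) / (cos t - r) ^ m) has_integral cos_quot_integral r m k) {-pi..0}"
  unfolding cos_quot_integral_def
  by (intro integrable_integral integrable_continuous_interval continuous_intros)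
     (use cos_ne_of_abs_gt_1[OF assms] in auto)

lemma cos_quot_integral_0_0: "cos_quot_integral r 0 0 = pi"
  by (simp add: cos_quot_integral_def)

lemma cos_quot_integral_0_Suc: "cos_quot_integral r 0 (Suc k) = 0"
proof -
  let ?k = "real (Suc k)"
  have "((\<lambda>t. cos (?k * t)) has_integral sin (?k * 0) / ?k - sin (?k * - pi) / ?k) {-pi..0}"
    by (intro fundamental_theorem_of_calculus)
       (auto simp: has_real_derivative_iff_has_vector_derivative[symmetric]
             intro!: derivative_eq_intros)
  then have "((\<lambda>t. cos (?k * t)) has_integral 0) {-pi..0}"
    by (simp only: sin_mult_minus_pi mult_zero_right sin_zero) simp
  then show ?thesis by (simp add: cos_quot_integral_def integral_unique)
qed

lemma cos_quot_integral_Suc_three_term: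
  assumes r: "\<bar>r\<bar> > 1"
  shows "cos_quot_integral r (Suc m) (k + 2) + cos_quot_integral r (Suc m) k
           - 2 * r * cos_quot_integral r (Suc m) (Suc k) = 2 * cos_quot_integral r m (Suc k)"
proof -
  let ?f = "\<lambda>k t. cos (real k * t) / (cos t - r) ^ Suc m"
  have combination: "((\<lambda>t. ?f (k + 2) t + ?f k t - 2 * r * ?f (Suc k) t) has_integral
          cos_quot_integral r (Suc m) (k + 2) + cos_quot_integral r (Suc m) k
           - 2 * r * cos_quot_integral r (Suc m) (Suc k)) {-pi..0}"
    by (intro has_integral_diff has_integral_add has_integral_mult_right
          has_integral_cos_quot_integral r)
  have pointwise: "?f (k + 2) t + ?f k t - 2 * r * ?f (Suc k) t
                   = 2 * (cos (real (Suc k) * t) / (cos t - r) ^ m)" for t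
  proof -
    have "?f (k + 2) t + ?f k t - 2 * r * ?f (Suc k) t
        = (cos (real (k + 2) * t) + cos (real k * t) - 2 * r * cos (real (Suc k) * t))
            / (cos t - r) ^ Suc m"
      by (simp add: add_divide_distrib diff_divide_distrib)
    also have "\<dots> = 2 * cos (real (Suc k) * t) * (cos t - r) / (cos t - r) ^ Suc m"
      by (simp only: cos_add_cos_Suc_Suc) (simp add: algebra_simps)
    also have "\<dots> = 2 * (cos (real (Suc k) * t) / (cos t - r) ^ m)"
      using cos_ne_of_abs_gt_1[OF r, of t] by simp
    finally show ?thesis .
  qed
  have "((\<lambda>t. 2 * (cos (real (Suc k) * t) / (cos t - r) ^ m)) has_integral
                   2 * cos_quot_integral r m (Suc k)) {-pi..0}"
    by (intro has_integral_mult_right has_integral_cos_quot_integral r)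
  with combination[unfolded pointwise] show ?thesis by (rule has_integral_unique)
qed

lemma cos_quot_integral_Suc_1:
  assumes r: "\<bar>r\<bar> > 1"
  shows "cos_quot_integral r (Suc m) 1 - r * cos_quot_integral r (Suc m) 0 = cos_quot_integral r m 0"
proof -
  let ?f = "\<lambda>k t. cos (real k * t) / (cos t - r) ^ Suc m"
  have combination: "((\<lambda>t. ?f 1 t - r * ?f 0 t) has_integral
          cos_quot_integral r (Suc m) 1 - r * cos_quot_integral r (Suc m) 0) {-pi..0}"
    by (intro has_integral_diff has_integral_mult_right has_integral_cos_quot_integral r)
  have pointwise: "?f 1 t - r * ?f 0 t = cos (real 0 * t) / (cos t - r) ^ m" for t
    using cos_ne_of_abs_gt_1[OF r, of t] by (simp add: diff_divide_distrib[symmetric])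
  from combination[unfolded pointwise] has_integral_cos_quot_integral[OF r, of 0 m]
  show ?thesis by (rule has_integral_unique)
qed

lemma quotient_rule_power_eq:
  fixes x :: "'a::field"
  assumes "x \<noteq> 0"
  shows "(d * x ^ Suc m - of_nat (Suc m) * (- s * x ^ m) * a) / (x ^ Suc m) ^ Suc (Suc 0)
           = d / x ^ Suc m + of_nat (Suc m) * (a * s) / x ^ Suc (Suc m)"
  using assms by (simp add: field_simps)

lemma has_real_derivative_sin_divide_power:
  fixes r t :: real
  assumes ne: "cos t \<noteq> r"
  shows "((\<lambda>t. sin (real (Suc k) * t) / (cos t - r) ^ Suc m) has_real_derivative
           real (Suc k) * (cos (real (Suc k) * t) / (cos t - r) ^ Suc m)
           + real (Suc m) / 2 * (cos (real k * t) / (cos t - r) ^ Suc (Suc m)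
                                 - cos (real (k + 2) * t) / (cos t - r) ^ Suc (Suc m)))
           (at t within S)"
proof -
  have ne': "cos t - r \<noteq> 0" using ne by simp
  have "((\<lambda>t. sin (real (Suc k) * t)) has_real_derivative cos (real (Suc k) * t) * real (Suc k))
          (at t within S)"
    by (auto intro!: derivative_eq_intros)
  moreover have "((\<lambda>t. cos t - r) has_real_derivative - sin t) (at t within S)"
    by (auto intro!: derivative_eq_intros)
  from DERIV_power[OF this, of "Suc m"]
  have "((\<lambda>t. (cos t - r) ^ Suc m) has_real_derivative
          real (Suc m) * (- sin t * (cos t - r) ^ m)) (at t within S)"
    by simp
  ultimately have "((\<lambda>t. sin (real (Suc k) * t) / (cos t - r) ^ Suc m) has_real_derivative
                     cos (real (Suc k) * t) * real (Suc k) / (cos t - r) ^ Suc m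
                     + real (Suc m) * (sin (real (Suc k) * t) * sin t) / (cos t - r) ^ Suc (Suc m))
                     (at t within S)"
    using DERIV_quotient ne' unfolding quotient_rule_power_eq[OF ne', symmetric] by fastforce
  then show ?thesis unfolding sin_Suc_mult_sin by (simp add: diff_divide_distrib algebra_simps)
qed

lemma cos_quot_integral_by_parts:
  assumes r: "\<bar>r\<bar> > 1"
  shows "2 * real (Suc k) * cos_quot_integral r (Suc m) (Suc k)
           = real (Suc m) * (cos_quot_integral r (Suc (Suc m)) (k + 2)
                             - cos_quot_integral r (Suc (Suc m)) k)"
proof -
  let ?f = "\<lambda>m k t. cos (real k * t) / (cos t - r) ^ m"
  let ?g = "\<lambda>t. real (Suc k) * ?f (Suc m) (Suc k) t
                 + real (Suc m) / 2 * (?f (Suc (Suc m)) k t - ?f (Suc (Suc m)) (k + 2) t)"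
  let ?h = "\<lambda>t. sin (real (Suc k) * t) / (cos t - r) ^ Suc m"
  have "(?g has_integral ?h 0 - ?h (-pi)) {-pi..0}"
    using has_real_derivative_sin_divide_power[OF cos_ne_of_abs_gt_1[OF r]]
    by (intro fundamental_theorem_of_calculus)
       (simp_all add: has_real_derivative_iff_has_vector_derivative[symmetric])
  moreover have "?h 0 - ?h (-pi) = 0" by (simp only: sin_mult_minus_pi) simp
  ultimately have boundary: "(?g has_integral 0) {-pi..0}" by (simp only:)
  have "(?g has_integral
      real (Suc k) * cos_quot_integral r (Suc m) (Suc k)
      + real (Suc m) / 2 * (cos_quot_integral r (Suc (Suc m)) k
                            - cos_quot_integral r (Suc (Suc m)) (k + 2))) {-pi..0}"
    by (intro has_integral_diff has_integral_add has_integral_mult_right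
          has_integral_cos_quot_integral r)
  from has_integral_unique[OF this boundary] show ?thesis by (simp add: field_simps)
qed

lemma cos_quot_integral_step_forward:
  assumes r: "\<bar>r\<bar> > 1"
  shows "cos_quot_integral r (Suc (Suc m)) (Suc k)
           = r * cos_quot_integral r (Suc (Suc m)) k
             + (1 + real k / real (Suc m)) * cos_quot_integral r (Suc m) k"
proof (cases k)
  case 0
  then show ?thesis using cos_quot_integral_Suc_1[OF r, of "Suc m"] by simp
next
  case (Suc j)
  have "cos_quot_integral r (Suc (Suc m)) (j + 2) - cos_quot_integral r (Suc (Suc m)) j
          = 2 * (real (Suc j) / real (Suc m) * cos_quot_integral r (Suc m) (Suc j))"
    using cos_quot_integral_by_parts[OF r, of j m] by (simp add: field_simps)
  with cos_quot_integral_Suc_three_term[OF r, of "Suc m" j]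
  have "cos_quot_integral r (Suc (Suc m)) (j + 2)
          = r * cos_quot_integral r (Suc (Suc m)) (Suc j)
            + (1 + real (Suc j) / real (Suc m)) * cos_quot_integral r (Suc m) (Suc j)"
    unfolding distrib_right mult_1 by linarith
  then show ?thesis by (simp add: Suc)
qed

lemma cos_quot_integral_step_backward:
  assumes r: "\<bar>r\<bar> > 1"
  shows "cos_quot_integral r (Suc (Suc m)) k
           = r * cos_quot_integral r (Suc (Suc m)) (Suc k)
             + (1 - real (Suc k) / real (Suc m)) * cos_quot_integral r (Suc m) (Suc k)"
proof -
  have "cos_quot_integral r (Suc (Suc m)) (k + 2) - cos_quot_integral r (Suc (Suc m)) k
          = 2 * (real (Suc k) / real (Suc m) * cos_quot_integral r (Suc m) (Suc k))"
    using cos_quot_integral_by_parts[OF r, of k m] by (simp add: field_simps)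
  with cos_quot_integral_Suc_three_term[OF r, of "Suc m" k] show ?thesis
    unfolding left_diff_distrib mult_1 by linarith
qed

lemma cos_quot_integral_raise_order:
  assumes r: "\<bar>r\<bar> > 1"
  shows "(1 - r\<^sup>2) * cos_quot_integral r (Suc (Suc m)) (Suc k)
           = r * (1 - real (Suc k) / real (Suc m)) * cos_quot_integral r (Suc m) (Suc k)
             + (1 + real k / real (Suc m)) * cos_quot_integral r (Suc m) k"
  using cos_quot_integral_step_forward[OF r, of m k]
  unfolding cos_quot_integral_step_backward[OF r, of m k]
  by (simp add: algebra_simps power2_eq_square)

lemma r_minus_rho:
  fixes r :: real
  assumes "\<bar>r\<bar> > 1"
  shows "r - rho r = sgn r * sqrt (r\<^sup>2 - 1)"
  using assms by (auto simp: rho_def sgn_if)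

lemma r_minus_rho_neq_0:
  fixes r :: real
  assumes "\<bar>r\<bar> > 1"
  shows "r - rho r \<noteq> 0"
  using assms by (auto simp: r_minus_rho power2_eq_1_iff sgn_if)

lemma rho_squared:
  fixes r :: real
  assumes "\<bar>r\<bar> > 1"
  shows "(rho r)\<^sup>2 = 2 * r * rho r - 1"
proof -
  have "r\<^sup>2 > 1" "r \<noteq> 0" using one_less_power[OF assms, of 2] assms by auto
  then have "(r - rho r)\<^sup>2 = r\<^sup>2 - 1"
    using assms by (simp add: r_minus_rho power_mult_distrib sgn_if)
  then show ?thesis by (simp add: power2_eq_square algebra_simps)
qed

lemma abs_rho_less_1:
  fixes r :: real
  assumes "\<bar>r\<bar> > 1"
  shows "\<bar>rho r\<bar> < 1"
proof -
  have "(\<bar>r\<bar> - 1)\<^sup>2 < r\<^sup>2 - 1" using assms by (simp add: power2_eq_square algebra_simps)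
  then have lower: "\<bar>r\<bar> - 1 < sqrt (r\<^sup>2 - 1)" by (metis real_less_rsqrt)
  have upper: "sqrt (r\<^sup>2 - 1) < \<bar>r\<bar>"
    using real_sqrt_less_iff[of "r\<^sup>2 - 1" "\<bar>r\<bar>\<^sup>2"] assms by simp
  have "\<bar>rho r\<bar> = \<bar>r\<bar> - sqrt (r\<^sup>2 - 1)"
    using assms lower upper by (cases "r > 0") (auto simp: rho_def)
  with lower show ?thesis by linarith
qed

lemma abs_divide_sqrt_eq:
  fixes r :: real
  assumes "\<bar>r\<bar> > 1"
  shows "\<bar>r\<bar> / sqrt (r\<^sup>2 - 1) = r / (r - rho r)"
  using assms by (simp add: r_minus_rho sgn_if)

lemma has_real_derivative_arctan_sin_divide:
  fixes \<rho> t :: real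
  assumes "\<bar>\<rho>\<bar> < 1"
  shows "((\<lambda>t. arctan (\<rho> * sin t / (1 - \<rho> * cos t))) has_real_derivative
           (\<rho> * cos t - \<rho>\<^sup>2) / (1 - 2 * \<rho> * cos t + \<rho>\<^sup>2)) (at t)"
proof -
  have "\<bar>\<rho> * cos t\<bar> \<le> \<bar>\<rho>\<bar>"
    using abs_cos_le_one[of t] by (simp add: abs_mult mult_left_le)
  with assms have den: "1 - \<rho> * cos t \<noteq> 0" by linarith
  have "\<rho> * cos t * (1 - \<rho> * cos t) - \<rho> * sin t * (\<rho> * sin t) = \<rho> * cos t - \<rho>\<^sup>2"
    using sin_cos_squared_add[of t] by algebra
  moreover have "((\<lambda>t. \<rho> * sin t / (1 - \<rho> * cos t)) has_real_derivative
      (\<rho> * cos t * (1 - \<rho> * cos t) - \<rho> * sin t * (\<rho> * sin t)) / (1 - \<rho> * cos t)\<^sup>2) (at t)"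
    using den by (auto intro!: derivative_eq_intros simp: power2_eq_square)
  ultimately have "((\<lambda>t. \<rho> * sin t / (1 - \<rho> * cos t)) has_real_derivative
          (\<rho> * cos t - \<rho>\<^sup>2) / (1 - \<rho> * cos t)\<^sup>2) (at t)"
    by simp
  from DERIV_chain2[OF DERIV_arctan this]
  have "((\<lambda>t. arctan (\<rho> * sin t / (1 - \<rho> * cos t))) has_real_derivative
          inverse (1 + (\<rho> * sin t / (1 - \<rho> * cos t))\<^sup>2)
          * ((\<rho> * cos t - \<rho>\<^sup>2) / (1 - \<rho> * cos t)\<^sup>2)) (at t)" .
  moreover have "1 + (\<rho> * sin t / (1 - \<rho> * cos t))\<^sup>2
                   = (1 - 2 * \<rho> * cos t + \<rho>\<^sup>2) / (1 - \<rho> * cos t)\<^sup>2"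
  proof -
    have "1 + (\<rho> * sin t / (1 - \<rho> * cos t))\<^sup>2
            = ((1 - \<rho> * cos t)\<^sup>2 + (\<rho> * sin t)\<^sup>2) / (1 - \<rho> * cos t)\<^sup>2"
      using den by (simp add: power_divide field_simps)
    also have "(1 - \<rho> * cos t)\<^sup>2 + (\<rho> * sin t)\<^sup>2 = 1 - 2 * \<rho> * cos t + \<rho>\<^sup>2"
      by (simp add: power_mult_distrib sin_squared_eq power2_diff algebra_simps)
    finally show ?thesis .
  qed
  moreover have "inverse (a / b) * (c / b) = c / a" if "b \<noteq> 0" for a b c :: real
    using that by (simp add: field_simps)
  ultimately show ?thesis
    using den by simp
qed

text \<open>The antiderivative comes from integrating termwise the expansion
  \<open>1 / (r - cos t) = (1 + 2 * (\<Sum>k\<ge>1. \<rho>^k * cos (k * t))) / (r - \<rho>)\<close>, using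
  \<open>\<Sum>k\<ge>1. \<rho>^k * sin (k * t) / k = arctan (\<rho> * sin t / (1 - \<rho> * cos t))\<close>.\<close>
lemma has_real_derivative_antiderivative_inverse_diff_cos:
  fixes r \<rho> t :: real
  assumes \<rho>2: "\<rho>\<^sup>2 = 2 * r * \<rho> - 1" and \<rho>1: "\<bar>\<rho>\<bar> < 1"
  shows "((\<lambda>t. (t + 2 * arctan (\<rho> * sin t / (1 - \<rho> * cos t))) / (r - \<rho>))
           has_real_derivative 1 / (r - cos t)) (at t)"
proof -
  have "\<rho>\<^sup>2 \<noteq> 1" using \<rho>1 by (auto simp: power2_eq_1_iff)
  with \<rho>2 have ne: "r - \<rho> \<noteq> 0" by (auto simp: power2_eq_square)
  have "\<bar>\<rho> * cos t\<bar> \<le> \<bar>\<rho>\<bar>"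
    using abs_cos_le_one[of t] by (simp add: abs_mult mult_left_le)
  with \<rho>1 have "(1 - \<rho> * cos t)\<^sup>2 > 0" by auto
  then have "(1 - \<rho> * cos t)\<^sup>2 + (\<rho> * sin t)\<^sup>2 > 0" by (simp add: add_pos_nonneg)
  moreover have "(1 - \<rho> * cos t)\<^sup>2 + (\<rho> * sin t)\<^sup>2 = 1 - 2 * \<rho> * cos t + \<rho>\<^sup>2"
    by (simp add: power_mult_distrib sin_squared_eq power2_diff algebra_simps)
  moreover have denom: "1 - 2 * \<rho> * cos t + \<rho>\<^sup>2 = 2 * \<rho> * (r - cos t)"
    using \<rho>2 by (simp add: algebra_simps)
  ultimately have "\<rho> \<noteq> 0" "r - cos t \<noteq> 0" by auto
  have "((\<lambda>t. (t + 2 * arctan (\<rho> * sin t / (1 - \<rho> * cos t))) / (r - \<rho>))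
      has_real_derivative (1 + 2 * ((\<rho> * cos t - \<rho>\<^sup>2) / (2 * \<rho> * (r - cos t)))) / (r - \<rho>)) (at t)"
    using has_real_derivative_arctan_sin_divide[OF \<rho>1, of t] unfolding denom
    by (intro DERIV_cdivide DERIV_add DERIV_ident DERIV_cmult)
  moreover have "(1 + 2 * ((\<rho> * cos t - \<rho>\<^sup>2) / (2 * \<rho> * (r - cos t)))) / (r - \<rho>) = 1 / (r - cos t)"
    using ne \<open>\<rho> \<noteq> 0\<close> \<open>r - cos t \<noteq> 0\<close>
    by (simp add: divide_simps power2_eq_square) (simp add: algebra_simps)
  ultimately show ?thesis by simp
qed

lemma cos_quot_integral_1_0:
  assumes r: "\<bar>r\<bar> > 1"
  shows "cos_quot_integral r 1 0 = - pi / (r - rho r)"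
proof -
  let ?F = "\<lambda>t. (t + 2 * arctan (rho r * sin t / (1 - rho r * cos t))) / (r - rho r)"
  have "((\<lambda>t. 1 / (r - cos t)) has_integral ?F 0 - ?F (-pi)) {-pi..0}"
    using has_real_derivative_antiderivative_inverse_diff_cos[OF rho_squared[OF r] abs_rho_less_1[OF r]]
    by (intro fundamental_theorem_of_calculus)
       (auto simp: has_real_derivative_iff_has_vector_derivative[symmetric] intro: has_field_derivative_at_within)
  from has_integral_neg[OF this]
  have "((\<lambda>t. 1 / (cos t - r)) has_integral - (?F 0 - ?F (-pi))) {-pi..0}"
    by (simp add: minus_divide_right)
  moreover have "- (?F 0 - ?F (-pi)) = - pi / (r - rho r)"
    by simp
  ultimately show ?thesis by (simp add: cos_quot_integral_def integral_unique)
qed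

lemma cos_quot_integral_1:
  assumes r: "\<bar>r\<bar> > 1"
  shows "cos_quot_integral r 1 k = - pi / (r - rho r) * rho r ^ k"
proof -
  define A where "A = - pi / (r - rho r)"
  have "cos_quot_integral r 1 k = A * rho r ^ k \<and> cos_quot_integral r 1 (Suc k) = A * rho r ^ Suc k"
  proof (induction k)
    case 0
    have "cos_quot_integral r 1 1 = pi + r * A"
      using cos_quot_integral_Suc_1[OF r, of 0] cos_quot_integral_1_0[OF r]
      by (simp add: cos_quot_integral_0_0 A_def)
    with cos_quot_integral_1_0[OF r] r_minus_rho_neq_0[OF r] show ?case
      by (simp add: A_def field_simps)
  next
    case (Suc k)
    have "cos_quot_integral r 1 (k + 2) = 2 * r * cos_quot_integral r 1 (Suc k) - cos_quot_integral r 1 k"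
      using cos_quot_integral_Suc_three_term[OF r, of 0 k] by (simp add: cos_quot_integral_0_Suc)
    also have "\<dots> = A * rho r ^ k * (2 * r * rho r - 1)"
      using Suc.IH by (simp add: algebra_simps)
    also have "\<dots> = A * rho r ^ k * (rho r)\<^sup>2"
      by (simp only: rho_squared[OF r])
    also have "\<dots> = A * rho r ^ (k + 2)"
      by (simp add: power_add power2_eq_square)
    finally show ?case using Suc.IH by simp
  qed
  then show ?thesis unfolding A_def by simp
qed

lemma cos_quot_integral_2:
  assumes r: "\<bar>r\<bar> > 1"
  shows "(1 - r\<^sup>2) * cos_quot_integral r 2 (Suc k)
           = - pi / (r - rho r) * rho r ^ k * (real (Suc k) - real k * r * rho r)"
proof -
  have "(1 - r\<^sup>2) * cos_quot_integral r 2 (Suc k)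
          = - r * real k * cos_quot_integral r 1 (Suc k) + real (Suc k) * cos_quot_integral r 1 k"
    using cos_quot_integral_raise_order[OF r, of 0 k] by (simp add: numeral_2_eq_2 algebra_simps)
  also have "\<dots> = - pi / (r - rho r) * rho r ^ k * (real (Suc k) - real k * r * rho r)"
    unfolding cos_quot_integral_1[OF r] by (simp add: algebra_simps)
  finally show ?thesis .
qed

lemma cos_quot_integral_3:
  assumes r: "\<bar>r\<bar> > 1"
  shows "(1 - r\<^sup>2)\<^sup>2 * cos_quot_integral r 3 (Suc (Suc k))
           = - pi / (r - rho r) * rho r ^ k
             * (((real k + 3) * (real k + 1 - real k * r * rho r)
                 - real k * r * rho r * (real k + 2 - (real k + 1) * r * rho r)) / 2)"
proof -
  define A where "A = - pi / (r - rho r)"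
  have raise: "(1 - r\<^sup>2) * cos_quot_integral r 3 (Suc (Suc k))
                 = - (real k / 2 * r) * cos_quot_integral r 2 (Suc (Suc k))
                   + (real k + 3) / 2 * cos_quot_integral r 2 (Suc k)"
    using cos_quot_integral_raise_order[OF r, of 1 "Suc k"]
    by (simp add: numeral_3_eq_3 numeral_2_eq_2 field_simps)
  have "(1 - r\<^sup>2)\<^sup>2 * cos_quot_integral r 3 (Suc (Suc k))
          = - (real k / 2 * r) * ((1 - r\<^sup>2) * cos_quot_integral r 2 (Suc (Suc k)))
            + (real k + 3) / 2 * ((1 - r\<^sup>2) * cos_quot_integral r 2 (Suc k))"
    by (simp only: power2_eq_square[of "1 - r\<^sup>2"] mult.assoc raise)
       (simp only: distrib_left mult.commute mult.left_commute)
  also have "\<dots> = A * rho r ^ k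
             * (((real k + 3) * (real k + 1 - real k * r * rho r)
                 - real k * r * rho r * (real k + 2 - (real k + 1) * r * rho r)) / 2)"
    unfolding cos_quot_integral_2[OF r, folded A_def] by (simp add: algebra_simps add_divide_distrib)
  finally show ?thesis by (simp only: A_def)
qed

lemma has_integral_cos_substitution:
  fixes f :: "real \<Rightarrow> real"
  assumes f: "continuous_on {-1..1} f"
  shows "((\<lambda>t. - sin t * f (cos t)) has_integral integral {-1..1} f) {-pi..0}"
proof -
  have "((\<lambda>t. (- sin t) *\<^sub>R f (cos t)) has_integral integral {cos (-pi)..cos 0} f) {-pi..0}"
  proof (rule has_integral_substitution_strong[of "{}"])
    show "(cos has_real_derivative - sin t) (at t within {-pi..0})" for t
      by (auto intro!: derivative_eq_intros)
  qed (auto intro!: continuous_intros f)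
  then show ?thesis by simp
qed

lemma cheb_T_cos:
  assumes "-pi \<le> t" "t \<le> 0"
  shows "cheb_T n (cos t) = cos (real n * t)"
  using assms by (simp add: cheb_T_def arccos_cos2)

lemma continuous_on_cheb_T: "continuous_on {-1..1} (cheb_T n)"
  unfolding cheb_T_def by (intro continuous_intros) auto

lemma power2_powr_three_halves:
  fixes y :: real
  assumes "y \<ge> 0"
  shows "(y\<^sup>2) powr (3/2) = y ^ 3"
proof (cases "y = 0")
  case False
  with assms have "y > 0" by simp
  then have "(y\<^sup>2) powr (3/2) = (y powr 2) powr (3/2)"
    by (simp add: powr_realpow)
  also have "\<dots> = y powr 3"
    by (simp add: powr_powr)
  finally show ?thesis
    using \<open>y > 0\<close> by (simp add: powr_realpow)
qed simp

lemma mult_square_one_minus_square_divide_cube: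
  fixes x r c :: real
  assumes "x \<noteq> 0"
  shows "c * (1 - (x + r)\<^sup>2)\<^sup>2 / x ^ 3
           = c * x + 4 * r * c + (6 * r\<^sup>2 - 2) * (c / x) + 4 * r * (r\<^sup>2 - 1) * (c / x\<^sup>2)
             + (r\<^sup>2 - 1)\<^sup>2 * (c / x ^ 3)"
proof -
  have "c * (1 - (x + r)\<^sup>2)\<^sup>2 = x ^ 3 * (c * x + 4 * r * c) + x * x * ((6 * r\<^sup>2 - 2) * c)
                                   + x * (4 * r * (r\<^sup>2 - 1) * c) + (r\<^sup>2 - 1)\<^sup>2 * c"
    by (simp add: power2_eq_square power3_eq_cube algebra_simps)
  with assms show ?thesis
    by (simp add: add_divide_distrib power2_eq_square power3_eq_cube)
qed

lemma cos_mult_sin4_divide_cube: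
  fixes r t :: real
  assumes "cos t \<noteq> r"
  shows "cos (real (k + 2) * t) * sin t ^ 4 / (cos t - r) ^ 3
           = (cos (real (k + 3) * t) + cos (real (k + 1) * t)) / 2 + 3 * r * cos (real (k + 2) * t)
             + (6 * r\<^sup>2 - 2) * (cos (real (k + 2) * t) / (cos t - r))
             + 4 * r * (r\<^sup>2 - 1) * (cos (real (k + 2) * t) / (cos t - r)\<^sup>2)
             + (r\<^sup>2 - 1)\<^sup>2 * (cos (real (k + 2) * t) / (cos t - r) ^ 3)"
proof -
  define x where "x = cos t - r"
  define c where "c = cos (real (k + 2) * t)"
  have "x \<noteq> 0" using assms by (simp add: x_def)
  have "c * sin t ^ 4 / x ^ 3 = c * (1 - (x + r)\<^sup>2)\<^sup>2 / x ^ 3"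
    by (simp add: x_def sin_squared_eq[symmetric] power_mult[symmetric])
  also have "\<dots> = c * x + 4 * r * c + (6 * r\<^sup>2 - 2) * (c / x) + 4 * r * (r\<^sup>2 - 1) * (c / x\<^sup>2)
                     + (r\<^sup>2 - 1)\<^sup>2 * (c / x ^ 3)"
    using mult_square_one_minus_square_divide_cube[OF \<open>x \<noteq> 0\<close>] .
  also have "c * x + 4 * r * c = (cos (real (k + 3) * t) + cos (real (k + 1) * t)) / 2 + 3 * r * c"
    using cos_add_cos_Suc_Suc[of "k + 1" t]
    by (simp add: x_def c_def numeral_3_eq_3 add.commute algebra_simps)
  finally show ?thesis by (simp only: c_def x_def)
qed

lemma has_integral_cos_sin4_divide_cube:
  assumes r: "\<bar>r\<bar> > 1"
  shows "((\<lambda>t. cos (real (k + 2) * t) * sin t ^ 4 / (cos t - r) ^ 3) has_integral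
           (6 * r\<^sup>2 - 2) * cos_quot_integral r 1 (k + 2)
           + 4 * r * (r\<^sup>2 - 1) * cos_quot_integral r 2 (k + 2)
           + (r\<^sup>2 - 1)\<^sup>2 * cos_quot_integral r 3 (k + 2)) {-pi..0}"
proof -
  let ?f = "\<lambda>m k t. cos (real k * t) / (cos t - r) ^ m"
  let ?g = "\<lambda>t. (?f 0 (k + 3) t + ?f 0 (k + 1) t) / 2 + 3 * r * ?f 0 (k + 2) t
                 + (6 * r\<^sup>2 - 2) * ?f 1 (k + 2) t + 4 * r * (r\<^sup>2 - 1) * ?f 2 (k + 2) t
                 + (r\<^sup>2 - 1)\<^sup>2 * ?f 3 (k + 2) t"
  have integral: "(?g has_integral
          (cos_quot_integral r 0 (k + 3) + cos_quot_integral r 0 (k + 1)) / 2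
          + 3 * r * cos_quot_integral r 0 (k + 2)
          + (6 * r\<^sup>2 - 2) * cos_quot_integral r 1 (k + 2)
          + 4 * r * (r\<^sup>2 - 1) * cos_quot_integral r 2 (k + 2)
          + (r\<^sup>2 - 1)\<^sup>2 * cos_quot_integral r 3 (k + 2)) {-pi..0}"
    by (intro has_integral_add has_integral_mult_right has_integral_divide
          has_integral_cos_quot_integral r)
  have integrand: "?g = (\<lambda>t. cos (real (k + 2) * t) * sin t ^ 4 / (cos t - r) ^ 3)"
    unfolding cos_mult_sin4_divide_cube[OF cos_ne_of_abs_gt_1[OF r]] by simp
  have zeros: "cos_quot_integral r 0 (k + 3) = 0" "cos_quot_integral r 0 (k + 1) = 0"
    "cos_quot_integral r 0 (k + 2) = 0"
    by (metis add_Suc_right Suc_eq_plus1 numeral_3_eq_3 numeral_2_eq_2 cos_quot_integral_0_Suc)+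
  from integral show ?thesis
    by (simp only: integrand zeros add_0_left mult_zero_right div_0)
qed

lemma combination_closed_form:
  fixes r \<rho> N x :: real
  assumes \<rho>2: "\<rho>\<^sup>2 = 2 * r * \<rho> - 1" and ne: "r - \<rho> \<noteq> 0"
  shows "- pi / (r - \<rho>) * x
           * ((6 * r\<^sup>2 - 2) * \<rho>\<^sup>2 - 4 * r * \<rho> * (N - (N - 1) * r * \<rho>)
              + ((N + 1) * (N - 1 - (N - 2) * r * \<rho>) - (N - 2) * r * \<rho> * (N - (N - 1) * r * \<rho>)) / 2)
         = pi / 4 * (x * \<rho> ^ 3 * ((N ^ 2 + 2 * N + 3) - 3 * (N + 1) * (r / (r - \<rho>)))
                     - x * \<rho> * ((N ^ 2 - 2 * N + 3) - 3 * (N - 1) * (r / (r - \<rho>))))"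
    (is "- pi / (r - \<rho>) * x * ?S = _")
proof -
  have gen: "p / (4 * d) * x * (y * (P * d - B * r) - z * (Q * d - C * r))
               = p / 4 * (x * y * (P - B * (r / d)) - x * z * (Q - C * (r / d)))"
    if "d \<noteq> 0" for p d y z P Q B C :: real
    using that by (simp add: field_simps)
  have "- pi / (r - \<rho>) * x * ?S = pi / (4 * (r - \<rho>)) * x * (-4 * ?S)"
    using ne by (simp add: field_simps)
  also have "-4 * ?S = \<rho> ^ 3 * ((N ^ 2 + 2 * N + 3) * (r - \<rho>) - 3 * (N + 1) * r)
                       - \<rho> * ((N ^ 2 - 2 * N + 3) * (r - \<rho>) - 3 * (N - 1) * r)"
    using \<rho>2 by algebra
  finally show ?thesis
    unfolding gen[OF ne] .
qed

lemma cos_quot_integral_combination: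
  assumes r: "\<bar>r\<bar> > 1" and n: "n \<ge> 2"
  shows "(6 * r\<^sup>2 - 2) * cos_quot_integral r 1 n + 4 * r * (r\<^sup>2 - 1) * cos_quot_integral r 2 n
           + (r\<^sup>2 - 1)\<^sup>2 * cos_quot_integral r 3 n
         = pi / 4 * (rho r ^ (n + 1) * ((real n ^ 2 + 2 * real n + 3)
                       - 3 * (real n + 1) * \<bar>r\<bar> / sqrt (r\<^sup>2 - 1))
                   - rho r ^ (n - 1) * ((real n ^ 2 - 2 * real n + 3)
                       - 3 * (real n - 1) * \<bar>r\<bar> / sqrt (r\<^sup>2 - 1)))"
proof -
  obtain k where k: "n = Suc (Suc k)" using n by (metis add_2_eq_Suc le_Suc_ex)
  define \<rho> where "\<rho> = rho r"
  define N where "N = real n"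
  define A where "A = - pi / (r - \<rho>)"
  have "n + 1 = k + 3" "n - 1 = k + 1" using k by simp_all
  then have powers: "\<rho> ^ (n + 1) = \<rho> ^ k * \<rho> ^ 3" "\<rho> ^ (n - 1) = \<rho> ^ k * \<rho>"
    by (simp_all only: power_add power_one_right)
  have "(6 * r\<^sup>2 - 2) * cos_quot_integral r 1 n + 4 * r * (r\<^sup>2 - 1) * cos_quot_integral r 2 n
           + (r\<^sup>2 - 1)\<^sup>2 * cos_quot_integral r 3 n
        = (6 * r\<^sup>2 - 2) * cos_quot_integral r 1 n - 4 * r * ((1 - r\<^sup>2) * cos_quot_integral r 2 n)
           + (1 - r\<^sup>2)\<^sup>2 * cos_quot_integral r 3 n"
    by (simp add: power2_commute[of "r\<^sup>2"] algebra_simps)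
  also have "\<dots> = A * \<rho> ^ k
      * ((6 * r\<^sup>2 - 2) * \<rho>\<^sup>2 - 4 * r * \<rho> * (N - (N - 1) * r * \<rho>)
         + ((N + 1) * (N - 1 - (N - 2) * r * \<rho>) - (N - 2) * r * \<rho> * (N - (N - 1) * r * \<rho>)) / 2)"
    unfolding k cos_quot_integral_1[OF r, folded \<rho>_def, folded A_def]
      cos_quot_integral_2[OF r, folded \<rho>_def, folded A_def]
      cos_quot_integral_3[OF r, folded \<rho>_def, folded A_def]
    by (simp add: N_def k power2_eq_square algebra_simps add_divide_distrib)
  also have "\<dots> = pi / 4 * (\<rho> ^ (n + 1) * ((N ^ 2 + 2 * N + 3) - 3 * (N + 1) * (r / (r - \<rho>)))
                   - \<rho> ^ (n - 1) * ((N ^ 2 - 2 * N + 3) - 3 * (N - 1) * (r / (r - \<rho>))))"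
    unfolding A_def powers
    by (rule combination_closed_form[OF rho_squared[OF r, folded \<rho>_def] r_minus_rho_neq_0[OF r, folded \<rho>_def]])
  finally show ?thesis
    by (simp only: times_divide_eq_right[symmetric] abs_divide_sqrt_eq[OF r] \<rho>_def N_def)
qed

lemma cheb_integral_eq_cos_quot_integrals:
  assumes r: "\<bar>r\<bar> > 1" and n: "n \<ge> 2"
  shows "integral {-1..1} (\<lambda>s. cheb_T n s * (1 - s\<^sup>2) powr (3/2) / (s - r) ^ 3)
           = (6 * r\<^sup>2 - 2) * cos_quot_integral r 1 n
             + 4 * r * (r\<^sup>2 - 1) * cos_quot_integral r 2 n
             + (r\<^sup>2 - 1)\<^sup>2 * cos_quot_integral r 3 n"
proof -
  let ?f = "\<lambda>s. cheb_T n s * (1 - s\<^sup>2) powr (3/2) / (s - r) ^ 3"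
  obtain k where k: "n = k + 2" using n by (metis le_add_diff_inverse2)
  have "continuous_on {-1..1} (\<lambda>s::real. (1 - s\<^sup>2) powr (3/2))"
    by (rule continuous_on_powr') (auto intro!: continuous_intros simp: abs_square_le_1)
  then have "continuous_on {-1..1} ?f"
    using r by (intro continuous_on_divide continuous_on_mult continuous_on_cheb_T)
               (auto intro!: continuous_intros)
  note substitution = has_integral_cos_substitution[OF this]
  have integrand: "- sin t * ?f (cos t) = cos (real n * t) * sin t ^ 4 / (cos t - r) ^ 3"
    if "t \<in> {-pi..0}" for t
  proof -
    have "- sin t \<ge> 0" using that sin_ge_zero[of "-t"] by simp
    then have "(1 - (cos t)\<^sup>2) powr (3/2) = (- sin t) ^ 3"
      using power2_powr_three_halves[of "- sin t"] by (simp add: sin_squared_eq[symmetric])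
    with that show ?thesis by (simp add: cheb_T_cos power3_eq_cube power4_eq_xxxx)
  qed
  from has_integral_eq[OF integrand substitution] have
    "((\<lambda>t. cos (real (k + 2) * t) * sin t ^ 4 / (cos t - r) ^ 3) has_integral
       integral {-1..1} ?f) {-pi..0}"
    by (simp only: k)
  from has_integral_unique[OF this has_integral_cos_sin4_divide_cube[OF r]] show ?thesis
    by (simp only: k)
qed

theorem mainTheorem13:
  fixes n :: nat and r :: real
  assumes "n \<ge> 2" and "\<bar>r\<bar> > 1"
  shows "integral {-1..1} (\<lambda>s. cheb_T n s * (1 - s\<^sup>2) powr (3/2) / (s - r) ^ 3)
    = pi / 4 * (rho r ^ (n + 1) * ((real n ^ 2 + 2 * real n + 3)
                  - 3 * (real n + 1) * \<bar>r\<bar> / sqrt (r\<^sup>2 - 1))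
              - rho r ^ (n - 1) * ((real n ^ 2 - 2 * real n + 3)
                  - 3 * (real n - 1) * \<bar>r\<bar> / sqrt (r\<^sup>2 - 1)))"
  using cheb_integral_eq_cos_quot_integrals[OF assms(2,1)]
        cos_quot_integral_combination[OF assms(2,1)]
  by (simp only:)

end
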